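(* Let $\mathcal{M}_i=(E_i,\rho_i)$, $i=1,2$, be $q$-matroids, $E=E_1\oplus E_2$ with projections $\pi_i:E\to E_i$, $\rho'_i(V)=\rho_i(\pi_i(V))$ for $V\le E$, and let $\rho$ be the rank function of $\mathcal{M}_1\oplus\mathcal{M}_2$. Define $\mathcal{X}=\{X\le E\mid \rho'_1(X)+\rho'_2(X)<\dim X\}$, $\mathcal{T}=\{X_1\oplus X_2\mid X_i\le E_i\}$, and for $V\le E$, $\mathcal{T}(V)=\{X_1\oplus X_2\mid X_i\le\pi_i(V)\}$. Then for every $V\le E$, \[ \rho(V)=\dim V+\min_{X\in\{0\}\cup\{X\in\mathcal{X}: X\le V\}}\big(\rho'_1(X)+\rho'_2(X)-\dim X\big) =\dim V+\min_{X\in\mathcal{T}}\big(\rho'_1(X)+\rho'_2(X)-\dim(X\cap V)\big) =\dim V+\min_{X\in\mathcal{T}(V)}\big(\rho'_1(X)+\rho'_2(X)-\dim(X\cap V)\big). \] As a consequence, $V$ is independent in $\mathcal{M}_1\oplus\mathcal{M}_2$ if and only if no subspace of $V$ lies in $\mathcal{X}$.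
   Context: Let $\mathbb{F}=\mathbb{F}_q$. A $q$-matroid is $\mathcal{M}=(E,\rho)$, $E$ a finite-dimensional $\mathbb{F}$-vector space, $\rho$ from subspaces to $\mathbb{Z}_{\ge0}$ with $0\le\rho(V)\le\dim V$, monotone and submodular; $V$ is independent if $\rho(V)=\dim V$. The direct sum $\mathcal{M}_1\oplus\mathcal{M}_2=(E,\rho)$ on $E=E_1\oplus E_2$ (each $E_i$ identified with its image) is defined by $\rho(V)=\dim V+\min_{X\le V}(\rho_1(\pi_1(X))+\rho_2(\pi_2(X))-\dim X)$. *)

theory Defs
  imports Complex_Main "HOL-Library.Product_Plus"
begin

text \<open>A q-matroid on the (finite-dimensional) F-vector space given by scalar
multiplication s (the ground space E is the whole carrier type).
The rank function is only constrained on subspaces.\<close>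
definition qmatroid :: "('f::field \<Rightarrow> 'v::ab_group_add \<Rightarrow> 'v) \<Rightarrow> ('v set \<Rightarrow> nat) \<Rightarrow> bool" where
  "qmatroid s r \<longleftrightarrow>
     (\<forall>V. module.subspace s V \<longrightarrow> r V \<le> vector_space.dim s V) \<and>
     (\<forall>V W. module.subspace s V \<and> module.subspace s W \<and> V \<subseteq> W \<longrightarrow> r V \<le> r W) \<and>
     (\<forall>V W. module.subspace s V \<and> module.subspace s W \<longrightarrow>
        r (module.span s (V \<union> W)) + r (V \<inter> W) \<le> r V + r W)"

definition prod_scale :: "('f \<Rightarrow> 'a \<Rightarrow> 'a) \<Rightarrow> ('f \<Rightarrow> 'b \<Rightarrow> 'b) \<Rightarrow> 'f \<Rightarrow> 'a \<times> 'b \<Rightarrow> 'a \<times> 'b" where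
  "prod_scale s1 s2 c p = (s1 c (fst p), s2 c (snd p))"

definition ds_val :: "('f::field \<Rightarrow> 'a::ab_group_add \<Rightarrow> 'a) \<Rightarrow> ('f \<Rightarrow> 'b::ab_group_add \<Rightarrow> 'b)
    \<Rightarrow> ('a set \<Rightarrow> nat) \<Rightarrow> ('b set \<Rightarrow> nat) \<Rightarrow> ('a \<times> 'b) set \<Rightarrow> ('a \<times> 'b) set \<Rightarrow> int" where
  "ds_val s1 s2 r1 r2 X Y =
     int (r1 (fst ` X)) + int (r2 (snd ` X)) - int (vector_space.dim (prod_scale s1 s2) Y)"

definition ds_rank :: "('f::field \<Rightarrow> 'a::ab_group_add \<Rightarrow> 'a) \<Rightarrow> ('f \<Rightarrow> 'b::ab_group_add \<Rightarrow> 'b)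
    \<Rightarrow> ('a set \<Rightarrow> nat) \<Rightarrow> ('b set \<Rightarrow> nat) \<Rightarrow> ('a \<times> 'b) set \<Rightarrow> int" where
  "ds_rank s1 s2 r1 r2 V =
     int (vector_space.dim (prod_scale s1 s2) V) +
     Min ((\<lambda>X. ds_val s1 s2 r1 r2 X X) ` {X. module.subspace (prod_scale s1 s2) X \<and> X \<subseteq> V})"

definition ds_X :: "('f::field \<Rightarrow> 'a::ab_group_add \<Rightarrow> 'a) \<Rightarrow> ('f \<Rightarrow> 'b::ab_group_add \<Rightarrow> 'b)
    \<Rightarrow> ('a set \<Rightarrow> nat) \<Rightarrow> ('b set \<Rightarrow> nat) \<Rightarrow> ('a \<times> 'b) set set" where
  "ds_X s1 s2 r1 r2 = {X. module.subspace (prod_scale s1 s2) X \<and>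
      r1 (fst ` X) + r2 (snd ` X) < vector_space.dim (prod_scale s1 s2) X}"

definition ds_T :: "('f::field \<Rightarrow> 'a::ab_group_add \<Rightarrow> 'a) \<Rightarrow> ('f \<Rightarrow> 'b::ab_group_add \<Rightarrow> 'b)
    \<Rightarrow> ('a \<times> 'b) set set" where
  "ds_T s1 s2 = {X1 \<times> X2 | X1 X2. module.subspace s1 X1 \<and> module.subspace s2 X2}"

definition ds_TV :: "('f::field \<Rightarrow> 'a::ab_group_add \<Rightarrow> 'a) \<Rightarrow> ('f \<Rightarrow> 'b::ab_group_add \<Rightarrow> 'b)
    \<Rightarrow> ('a \<times> 'b) set \<Rightarrow> ('a \<times> 'b) set set" where
  "ds_TV s1 s2 V = {X1 \<times> X2 | X1 X2. module.subspace s1 X1 \<and> X1 \<subseteq> fst ` V \<and>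
                                    module.subspace s2 X2 \<and> X2 \<subseteq> snd ` V}"

end

theory Submission
  imports Defs
begin

text \<open>Over a finite field all spaces involved are finite, so every minimum ranges over a
  finite family. The subspace \<open>0\<close> has value \<open>0\<close>, so in the minimum defining \<open>\<rho>(V)\<close> only
  subspaces of negative value, the members of \<open>\<X>\<close>, matter. For the other two formulas,
  compare a subspace \<open>Y \<le> V\<close> with the product \<open>X = \<pi>\<^sub>1(Y) \<oplus> \<pi>\<^sub>2(Y) \<in> \<T>(V)\<close>: it has the same
  projections and \<open>Y \<le> X \<inter> V\<close>. Conversely, for \<open>X = X\<^sub>1 \<oplus> X\<^sub>2 \<in> \<T>\<close> the projections of
  \<open>X \<inter> V\<close> lie in \<open>X\<^sub>1\<close> and \<open>X\<^sub>2\<close>, hence have no larger ranks. So each minimum dominates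
  the other.\<close>

lemma Min_image_eq_if_dominated:
  fixes f g :: "_ \<Rightarrow> 'c::linorder"
  assumes "finite A" "finite B" "A \<noteq> {}"
    and "\<And>a. a \<in> A \<Longrightarrow> \<exists>b\<in>B. g b \<le> f a"
    and "\<And>b. b \<in> B \<Longrightarrow> \<exists>a\<in>A. f a \<le> g b"
  shows "Min (f ` A) = Min (g ` B)"
proof -
  have "B \<noteq> {}" using assms(3,4) by blast
  have "Min (g ` B) \<le> f a" if "a \<in> A" for a
    using assms(2) assms(4)[OF that] by (auto intro: Min.coboundedI order_trans)
  moreover have "Min (f ` A) \<le> g b" if "b \<in> B" for b
    using assms(1) assms(5)[OF that] by (auto intro: Min.coboundedI order_trans)
  ultimately show ?thesis
    using assms(1-3) \<open>B \<noteq> {}\<close> by (intro antisym) (simp_all add: Min_le_iff)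
qed

lemma (in module) finite_span_if_finite_scalars:
  assumes "finite (UNIV :: 'a set)" "finite S"
  shows "finite (span S)"
  using assms(2)
proof induct
  case empty
  then show ?case by simp
next
  case (insert x S)
  have "span (insert x S) \<subseteq> (\<lambda>(k, y). y + k *s x) ` (UNIV \<times> span S)"
  proof
    fix z assume "z \<in> span (insert x S)"
    then obtain k where "z - k *s x \<in> span S" by (auto simp: span_insert)
    then show "z \<in> (\<lambda>(k, y). y + k *s x) ` (UNIV \<times> span S)"
      by (auto intro!: image_eqI[of z _ "(k, z - k *s x)"])
  qed
  then show ?case
    using insert assms(1) by (meson finite_SigmaI finite_imageI finite_subset)
qed

lemma (in finite_dimensional_vector_space) finite_UNIV_if_finite_scalars:
  assumes "finite (UNIV :: 'a set)"
  shows "finite (UNIV :: 'b set)"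
  using finite_span_if_finite_scalars[OF assms finite_Basis] by (simp add: span_Basis)

lemma (in vector_space) dim_subset_finite:
  assumes "finite T" "S \<subseteq> T"
  shows "dim S \<le> dim T"
proof -
  obtain B where B: "B \<subseteq> T" "independent B" "T \<subseteq> span B" "card B = dim T"
    by (rule basis_exists)
  have "finite B" using assms(1) B(1) by (rule rev_finite_subset)
  have "S \<subseteq> span B" using assms(2) B(3) by (rule order_trans)
  then have "dim S \<le> card B" using \<open>finite B\<close> by (rule dim_le_card)
  with B show ?thesis by simp
qed

context vector_space_pair
begin

sublocale E: vector_space "prod_scale s1 s2"
  using vs1.vector_space_axioms vs2.vector_space_axioms
  unfolding vector_space_def prod_scale_def by (auto simp: prod_eq_iff)

lemma subspace_fst_image:
  assumes "E.subspace X"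
  shows "vs1.subspace (fst ` X)"
proof (rule vs1.subspaceI)
  show "0 \<in> fst ` X" using E.subspace_0[OF assms] by force
next
  fix x y assume "x \<in> fst ` X" "y \<in> fst ` X"
  then show "x + y \<in> fst ` X" using E.subspace_add[OF assms] by force
next
  fix c x assume "x \<in> fst ` X"
  then show "s1 c x \<in> fst ` X"
    using E.subspace_scale[OF assms] by (force simp: prod_scale_def)
qed

lemma subspace_snd_image:
  assumes "E.subspace X"
  shows "vs2.subspace (snd ` X)"
proof (rule vs2.subspaceI)
  show "0 \<in> snd ` X" using E.subspace_0[OF assms] by force
next
  fix x y assume "x \<in> snd ` X" "y \<in> snd ` X"
  then show "x + y \<in> snd ` X" using E.subspace_add[OF assms] by force
next
  fix c x assume "x \<in> snd ` X"
  then show "s2 c x \<in> snd ` X"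
    using E.subspace_scale[OF assms] by (force simp: prod_scale_def)
qed

lemma subspace_Times:
  assumes "vs1.subspace X1" "vs2.subspace X2"
  shows "E.subspace (X1 \<times> X2)"
  using assms unfolding E.subspace_def vs1.subspace_def vs2.subspace_def
  by (auto simp: prod_scale_def zero_prod_def)

end

lemma (in vector_space) qmatroid_rank_mono:
  assumes "qmatroid scale r" "subspace V" "subspace W" "V \<subseteq> W"
  shows "r V \<le> r W"
  using assms unfolding qmatroid_def by blast

lemma (in vector_space) dim_single_0: "dim {0} = 0"
  using dim_span[of "{}"] dim_eq_card_independent[OF independent_empty] by simp

lemma (in vector_space) qmatroid_rank_zero:
  assumes "qmatroid scale r"
  shows "r {0} = 0"
  using assms subspace_single_0 dim_single_0 unfolding qmatroid_def by fastforce

locale qmatroid_direct_sum = vector_space_pair s1 s2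
  for s1 :: "'f::{field,finite} \<Rightarrow> 'a::ab_group_add \<Rightarrow> 'a"
    and s2 :: "'f \<Rightarrow> 'b::ab_group_add \<Rightarrow> 'b" +
  fixes B1 :: "'a set" and B2 :: "'b set" and r1 :: "'a set \<Rightarrow> nat" and r2 :: "'b set \<Rightarrow> nat"
  assumes finite_dimensional1: "finite_dimensional_vector_space s1 B1"
    and finite_dimensional2: "finite_dimensional_vector_space s2 B2"
    and qmatroid1: "qmatroid s1 r1" and qmatroid2: "qmatroid s2 r2"
begin

lemma finite_UNIV_direct_sum: "finite (UNIV :: ('a \<times> 'b) set)"
  using finite_dimensional_vector_space.finite_UNIV_if_finite_scalars
    [OF finite_dimensional1] finite_dimensional_vector_space.finite_UNIV_if_finite_scalars
    [OF finite_dimensional2]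
  by (simp add: finite_Prod_UNIV)

lemma finite_family_of_subsets: "finite (\<S> :: ('a \<times> 'b) set set)"
  by (rule finite_subset[OF subset_UNIV]) (simp add: Finite_Set.finite_set finite_UNIV_direct_sum)

lemma ds_val_zero: "ds_val s1 s2 r1 r2 {0} {0} = 0"
  using vs1.qmatroid_rank_zero[OF qmatroid1] vs2.qmatroid_rank_zero[OF qmatroid2]
  unfolding ds_val_def by (simp add: E.dim_single_0)

lemma ds_val_neg_iff:
  assumes "E.subspace X"
  shows "ds_val s1 s2 r1 r2 X X < 0 \<longleftrightarrow> X \<in> ds_X s1 s2 r1 r2"
  using assms unfolding ds_val_def ds_X_def by auto

lemma ds_val_Int_le:
  assumes "vs1.subspace X1" "vs2.subspace X2" "E.subspace Y" "Y \<subseteq> X1 \<times> X2"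
  shows "ds_val s1 s2 r1 r2 Y Y \<le> ds_val s1 s2 r1 r2 (X1 \<times> X2) Y"
proof -
  have "fst ` (X1 \<times> X2) = X1" "snd ` (X1 \<times> X2) = X2"
    using assms(1,2) vs1.subspace_0 vs2.subspace_0 by auto
  moreover have "r1 (fst ` Y) \<le> r1 X1" "r2 (snd ` Y) \<le> r2 X2"
    using assms by (auto intro!: vs1.qmatroid_rank_mono[OF qmatroid1]
        vs2.qmatroid_rank_mono[OF qmatroid2] subspace_fst_image subspace_snd_image)
  ultimately show ?thesis unfolding ds_val_def by simp
qed

lemma ds_val_Times_projections_le:
  assumes "E.subspace Y" "Y \<subseteq> V"
  shows "ds_val s1 s2 r1 r2 (fst ` Y \<times> snd ` Y) ((fst ` Y \<times> snd ` Y) \<inter> V)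
    \<le> ds_val s1 s2 r1 r2 Y Y"
proof -
  have "Y \<noteq> {}" using E.subspace_0[OF assms(1)] by auto
  then have "fst ` (fst ` Y \<times> snd ` Y) = fst ` Y" "snd ` (fst ` Y \<times> snd ` Y) = snd ` Y"
    by auto
  moreover have "E.dim Y \<le> E.dim ((fst ` Y \<times> snd ` Y) \<inter> V)"
    by (rule E.dim_subset_finite[OF finite_subset[OF subset_UNIV finite_UNIV_direct_sum]])
      (use assms(2) in force)
  ultimately show ?thesis unfolding ds_val_def by simp
qed

context
  fixes V assumes V: "E.subspace V"
begin

lemma zero_in_subspaces: "{0} \<in> {X. E.subspace X \<and> X \<subseteq> V}"
  using E.subspace_single_0 E.subspace_0[OF V] by simp

lemma ds_rank_eq_Min_ds_X:
  "ds_rank s1 s2 r1 r2 V = int (E.dim V) +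
     Min ((\<lambda>X. ds_val s1 s2 r1 r2 X X) ` ({{0}} \<union> {X \<in> ds_X s1 s2 r1 r2. X \<subseteq> V}))"
  unfolding ds_rank_def
proof (intro arg_cong[where f = "(+) _"] Min_image_eq_if_dominated finite_family_of_subsets)
  show "{X. E.subspace X \<and> X \<subseteq> V} \<noteq> {}" using zero_in_subspaces by blast
next
  fix X assume X: "X \<in> {X. E.subspace X \<and> X \<subseteq> V}"
  show "\<exists>Y \<in> {{0}} \<union> {X \<in> ds_X s1 s2 r1 r2. X \<subseteq> V}.
      ds_val s1 s2 r1 r2 Y Y \<le> ds_val s1 s2 r1 r2 X X"
  proof (cases "X \<in> ds_X s1 s2 r1 r2")
    case True
    with X show ?thesis by blast
  next
    case False
    with X have "0 \<le> ds_val s1 s2 r1 r2 X X" using ds_val_neg_iff by force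
    then show ?thesis using ds_val_zero by auto
  qed
next
  fix Y assume "Y \<in> {{0}} \<union> {X \<in> ds_X s1 s2 r1 r2. X \<subseteq> V}"
  then have "Y \<in> {X. E.subspace X \<and> X \<subseteq> V}"
    using zero_in_subspaces unfolding ds_X_def by auto
  then show "\<exists>X \<in> {X. E.subspace X \<and> X \<subseteq> V}.
      ds_val s1 s2 r1 r2 X X \<le> ds_val s1 s2 r1 r2 Y Y" by blast
qed

lemma ds_rank_eq_Min_products:
  assumes "ds_TV s1 s2 V \<subseteq> \<T>" "\<T> \<subseteq> ds_T s1 s2"
  shows "ds_rank s1 s2 r1 r2 V = int (E.dim V) +
     Min ((\<lambda>X. ds_val s1 s2 r1 r2 X (X \<inter> V)) ` \<T>)"
  unfolding ds_rank_def
proof (intro arg_cong[where f = "(+) _"] Min_image_eq_if_dominated finite_family_of_subsets)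
  show "{X. E.subspace X \<and> X \<subseteq> V} \<noteq> {}" using zero_in_subspaces by blast
next
  fix Y assume Y: "Y \<in> {X. E.subspace X \<and> X \<subseteq> V}"
  then have "fst ` Y \<times> snd ` Y \<in> ds_TV s1 s2 V"
    unfolding ds_TV_def by (blast intro: subspace_fst_image subspace_snd_image)
  then show "\<exists>X \<in> \<T>. ds_val s1 s2 r1 r2 X (X \<inter> V) \<le> ds_val s1 s2 r1 r2 Y Y"
    using assms(1) ds_val_Times_projections_le Y by blast
next
  fix X assume "X \<in> \<T>"
  then obtain X1 X2 where X: "X = X1 \<times> X2" "vs1.subspace X1" "vs2.subspace X2"
    using assms(2) unfolding ds_T_def by blast
  then have "X \<inter> V \<in> {X. E.subspace X \<and> X \<subseteq> V}"
    using V by (simp add: E.subspace_inter subspace_Times)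
  then show "\<exists>Y \<in> {X. E.subspace X \<and> X \<subseteq> V}.
      ds_val s1 s2 r1 r2 Y Y \<le> ds_val s1 s2 r1 r2 X (X \<inter> V)"
    using X ds_val_Int_le by blast
qed

lemma ds_rank_eq_dim_iff:
  "ds_rank s1 s2 r1 r2 V = int (E.dim V) \<longleftrightarrow> \<not> (\<exists>X. X \<subseteq> V \<and> X \<in> ds_X s1 s2 r1 r2)"
proof
  assume "ds_rank s1 s2 r1 r2 V = int (E.dim V)"
  then have Min_zero: "Min ((\<lambda>X. ds_val s1 s2 r1 r2 X X) `
      ({{0}} \<union> {X \<in> ds_X s1 s2 r1 r2. X \<subseteq> V})) = 0"
    using ds_rank_eq_Min_ds_X by simp
  show "\<not> (\<exists>X. X \<subseteq> V \<and> X \<in> ds_X s1 s2 r1 r2)"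
  proof
    assume "\<exists>X. X \<subseteq> V \<and> X \<in> ds_X s1 s2 r1 r2"
    then obtain X where "X \<subseteq> V" "X \<in> ds_X s1 s2 r1 r2" by blast
    then have "Min ((\<lambda>X. ds_val s1 s2 r1 r2 X X) `
        ({{0}} \<union> {X \<in> ds_X s1 s2 r1 r2. X \<subseteq> V})) \<le> ds_val s1 s2 r1 r2 X X"
      by (intro Min_le finite_imageI finite_family_of_subsets) blast
    moreover have "ds_val s1 s2 r1 r2 X X < 0"
      using \<open>X \<in> ds_X s1 s2 r1 r2\<close> ds_val_neg_iff unfolding ds_X_def by blast
    ultimately show False using Min_zero by simp
  qed
next
  assume "\<not> (\<exists>X. X \<subseteq> V \<and> X \<in> ds_X s1 s2 r1 r2)"
  then have no_X: "{X \<in> ds_X s1 s2 r1 r2. X \<subseteq> V} = {}" by blast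
  show "ds_rank s1 s2 r1 r2 V = int (E.dim V)"
    unfolding ds_rank_eq_Min_ds_X no_X using ds_val_zero by simp
qed

end

end

theorem proposition5p4:
  fixes s1 :: "'f::{field,finite} \<Rightarrow> 'a::ab_group_add \<Rightarrow> 'a"
    and s2 :: "'f \<Rightarrow> 'b::ab_group_add \<Rightarrow> 'b"
    and B1 :: "'a set" and B2 :: "'b set"
    and r1 :: "'a set \<Rightarrow> nat" and r2 :: "'b set \<Rightarrow> nat"
  assumes "finite_dimensional_vector_space s1 B1"
    and "finite_dimensional_vector_space s2 B2"
    and "qmatroid s1 r1" and "qmatroid s2 r2"
  shows "\<forall>V. module.subspace (prod_scale s1 s2) V \<longrightarrow>
     ds_rank s1 s2 r1 r2 V =
       int (vector_space.dim (prod_scale s1 s2) V) +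
       Min ((\<lambda>X. ds_val s1 s2 r1 r2 X X) `
              ({{0}} \<union> {X \<in> ds_X s1 s2 r1 r2. X \<subseteq> V})) \<and>
     ds_rank s1 s2 r1 r2 V =
       int (vector_space.dim (prod_scale s1 s2) V) +
       Min ((\<lambda>X. ds_val s1 s2 r1 r2 X (X \<inter> V)) ` ds_T s1 s2) \<and>
     ds_rank s1 s2 r1 r2 V =
       int (vector_space.dim (prod_scale s1 s2) V) +
       Min ((\<lambda>X. ds_val s1 s2 r1 r2 X (X \<inter> V)) ` ds_TV s1 s2 V) \<and>
     (ds_rank s1 s2 r1 r2 V = int (vector_space.dim (prod_scale s1 s2) V) \<longleftrightarrow>
       \<not> (\<exists>X. X \<subseteq> V \<and> X \<in> ds_X s1 s2 r1 r2))"
proof -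
  interpret qmatroid_direct_sum s1 s2 B1 B2 r1 r2
    using assms by (intro qmatroid_direct_sum.intro vector_space_pair.intro
        qmatroid_direct_sum_axioms.intro finite_dimensional_vector_space.axioms(1))
  have TV_subset_T: "ds_TV s1 s2 V \<subseteq> ds_T s1 s2" for V
    unfolding ds_TV_def ds_T_def by blast
  show ?thesis
    using ds_rank_eq_Min_ds_X ds_rank_eq_dim_iff
      ds_rank_eq_Min_products[OF _ TV_subset_T order_refl]
      ds_rank_eq_Min_products[OF _ order_refl TV_subset_T]
    by blast
qed

end
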